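(* Let $Y_1,Y_2,\ldots$ be i.i.d. Bernoulli$(1/2)$ and let $(Z^k)_k$ be generated by the bit-drop scheme described in the context, independently of $(Y_i)$. For integers $l\ge1$, $j\ge 0$ let $L^a_l(j)$ be the length of a longest common subsequence of $Z^j$ and $Y_1\ldots Y_l$. There are constants $C,c>0$ such that for every $\delta\in(0,1)$ and every $k\ge1$, $$P\Big(L^a_k\big(\lfloor 2(1-\delta)k\rfloor\big)=k\Big)\leq Ce^{-c\delta^2k}.$$
   Context: Bit-drop scheme: let $V_1,V_2,\ldots$ be i.i.d. Bernoulli$(1/2)$ and let $T_3,T_4,\ldots$ be independent, independent of $(V_k)$, with $T_{k+1}$ uniform on $\{2,\ldots,k\}$. Set $Z^2:=V_1V_2$ and, given $Z^k=Z^k_1\ldots Z^k_k$, define $Z^{k+1}_j:=Z^k_j$ for $j<T_{k+1}$, $Z^{k+1}_{T_{k+1}}:=V_{k+1}$, $Z^{k+1}_j:=Z^k_{j-1}$ for $T_{k+1}<j\le k+1$. Convention: $Z^0$ empty, $Z^1:=V_1$. *)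

theory Defs
  imports "HOL-Probability.Probability" "HOL-Library.Sublist"
begin

text \<open>Bits are modelled as booleans; Bernoulli(1/2) is bernoulli_pmf (1/2).
  Indices are 1-based as in the paper: V i for i >= 1, T i for i >= 3.\<close>

text \<open>The bit-drop scheme as a deterministic function of the sequences V and T.
  Z^{k+1} is obtained from Z^k by inserting V(k+1) at position T(k+1) (1-based).\<close>
fun zseq :: "(nat \<Rightarrow> bool) \<Rightarrow> (nat \<Rightarrow> nat) \<Rightarrow> nat \<Rightarrow> bool list" where
  "zseq V T 0 = []"
| "zseq V T (Suc 0) = [V 1]"
| "zseq V T (Suc (Suc 0)) = [V 1, V 2]"
| "zseq V T (Suc (Suc (Suc k))) =
     (let z = zseq V T (Suc (Suc k)); t = T (k + 3)
      in take (t - 1) z @ [V (k + 3)] @ drop (t - 1) z)"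

definition lcs_len :: "'a list \<Rightarrow> 'a list \<Rightarrow> nat" where
  "lcs_len xs ys = Max {length zs | zs. subseq zs xs \<and> subseq zs ys}"

text \<open>Only the finitely many coordinates that Z^j and Y_1..Y_l depend on are sampled.\<close>
definition ZY_pmf :: "nat \<Rightarrow> nat \<Rightarrow> (bool list \<times> bool list) pmf" where
  "ZY_pmf j l =
     bind_pmf (Pi_pmf {1..j} False (\<lambda>_. bernoulli_pmf (1/2))) (\<lambda>V.
     bind_pmf (Pi_pmf {3..j} 0 (\<lambda>i. pmf_of_set {2..i - 1})) (\<lambda>T.
     bind_pmf (Pi_pmf {1..l} False (\<lambda>_. bernoulli_pmf (1/2))) (\<lambda>Y.
     return_pmf (zseq V T j, map Y [1..<l + 1]))))"

end

theory Submission
  imports Defs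
begin

text \<open>The bit-drop scheme only rearranges the bits: \<open>Z\<^sup>j\<close> lists \<open>V\<^sub>1, \<dots>, V\<^sub>j\<close> in an order
  that depends on \<open>T\<close> alone. Hence, given \<open>T\<close> and \<open>Y\<close>, the word \<open>Z\<^sup>j\<close> consists of \<open>j\<close> fresh
  fair bits, and the event \<open>L\<^sup>a\<^sub>k(j) = k\<close> says that \<open>Y\<^sub>1\<dots>Y\<^sub>k\<close> is a subsequence of it.
  Matching greedily, each fair bit advances the match with probability \<open>1/2\<close>, so that
  event has the probability that a Binomial\<open>(j, 1/2)\<close> variable is at least \<open>k\<close>.
  For \<open>j \<le> 2(1 - \<delta>)k\<close> an exponential Markov bound with parameter \<open>\<delta>/2\<close> makes this at
  most \<open>exp(-\<delta>\<^sup>2k/4)\<close>.\<close>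

lemma subseq_if_lcs_len_eq_length:
  assumes "lcs_len xs ys = length ys"
  shows "subseq ys xs"
proof -
  let ?S = "{length zs | zs. subseq zs xs \<and> subseq zs ys}"
  have "finite ?S"
    by (rule finite_subset[of _ "{0..length ys}"]) (auto dest: list_emb_length)
  moreover have "?S \<noteq> {}"
    by (auto intro!: exI[of _ "[]"])
  ultimately have "Max ?S \<in> ?S"
    by (rule Max_in)
  then obtain zs where "length zs = length ys" "subseq zs xs" "subseq zs ys"
    using assms unfolding lcs_len_def by auto
  then show ?thesis
    using subseq_same_length by metis
qed

fun zseq_positions :: "(nat \<Rightarrow> nat) \<Rightarrow> nat \<Rightarrow> nat list" where
  "zseq_positions T 0 = []"
| "zseq_positions T (Suc 0) = [1]"
| "zseq_positions T (Suc (Suc 0)) = [1, 2]"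
| "zseq_positions T (Suc (Suc (Suc k))) =
     (let z = zseq_positions T (Suc (Suc k)); t = T (k + 3)
      in take (t - 1) z @ [k + 3] @ drop (t - 1) z)"

lemma zseq_eq_map_positions: "zseq V T j = map V (zseq_positions T j)"
  by (induction V T j rule: zseq.induct) (auto simp: Let_def take_map drop_map)

lemma set_take_Cons_drop: "set (take i xs @ x # drop i xs) = insert x (set xs)"
  using set_append[of "take i xs" "drop i xs"] by simp

lemma set_zseq_positions: "set (zseq_positions T j) = {1..j}"
proof (induction T j rule: zseq_positions.induct)
  case (4 T k)
  then show ?case
    by (simp add: Let_def set_take_Cons_drop atLeastAtMostSuc_conv numeral_3_eq_3 del: set_append)
qed auto

lemma length_zseq_positions: "length (zseq_positions T j) = j"
  by (induction T j rule: zseq_positions.induct) (auto simp: Let_def)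

lemma distinct_zseq_positions: "distinct (zseq_positions T j)"
  by (rule card_distinct) (simp add: set_zseq_positions length_zseq_positions)

fun subseq_prob :: "nat \<Rightarrow> nat \<Rightarrow> real" where
  "subseq_prob n 0 = 1"
| "subseq_prob 0 (Suc m) = 0"
| "subseq_prob (Suc n) (Suc m) = (subseq_prob n m + subseq_prob n (Suc m)) / 2"

lemma subseq_prob_nonneg: "subseq_prob n m \<ge> 0"
  by (induction n m rule: subseq_prob.induct) auto

lemma subseq_prob_le_exp_moment:
  fixes t :: real
  assumes "0 \<le> t"
  shows "subseq_prob n m \<le> exp (- t * m) * ((1 + exp t) / 2) ^ n"
proof (induction n m rule: subseq_prob.induct)
  case (1 n)
  have "1 \<le> (1 + exp t) / 2" using assms by simp
  then show ?case by (simp add: one_le_power)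
next
  case (2 m)
  then show ?case by simp
next
  case (3 n m)
  let ?M = "((1 + exp t) / 2) ^ n"
  have shift: "exp (- t * m) = exp (- t * Suc m) * exp t"
    by (simp add: algebra_simps flip: exp_add)
  have "subseq_prob (Suc n) (Suc m) \<le> (exp (- t * m) * ?M + exp (- t * Suc m) * ?M) / 2"
    using 3 by simp
  also have "\<dots> = exp (- t * Suc m) * ((1 + exp t) / 2) ^ Suc n"
    unfolding shift power_Suc by (simp add: algebra_simps)
  finally show ?case .
qed

lemma subseq_prob_le_exp_square:
  fixes \<delta> :: real
  assumes "0 \<le> \<delta>" "\<delta> \<le> 1" and n: "real n \<le> 2 * (1 - \<delta>) * m"
  shows "subseq_prob n m \<le> exp (- (1/4) * \<delta>\<^sup>2 * m)"
proof -
  define t where "t = \<delta> / 2"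
  have t: "0 \<le> t" "t \<le> 1" using assms by (auto simp: t_def)
  have "(1 + exp t) / 2 \<le> 1 + (t/2 + t\<^sup>2/2)"
    using exp_bound[OF t] by simp
  also have "\<dots> \<le> exp (t/2 + t\<^sup>2/2)"
    by (rule exp_ge_add_one_self)
  finally have "((1 + exp t) / 2) ^ n \<le> exp (t/2 + t\<^sup>2/2) ^ n"
    by (intro power_mono) (auto intro: add_nonneg_nonneg)
  then have mgf: "((1 + exp t) / 2) ^ n \<le> exp (n * (t/2 + t\<^sup>2/2))"
    by (simp add: exp_of_nat_mult)
  have "n * (t/2 + t\<^sup>2/2) \<le> 2 * (1 - \<delta>) * m * (t/2 + t\<^sup>2/2)"
    using n t by (intro mult_right_mono) auto
  also have "\<dots> \<le> (1 - \<delta>) * m * t + m * t\<^sup>2"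
    using assms by (simp add: algebra_simps mult_right_mono)
  finally have exponent: "- t * m + n * (t/2 + t\<^sup>2/2) \<le> - (1/4) * \<delta>\<^sup>2 * m"
    by (simp add: t_def power2_eq_square algebra_simps)
  have "subseq_prob n m \<le> exp (- t * m) * ((1 + exp t) / 2) ^ n"
    using subseq_prob_le_exp_moment[OF t(1)] .
  also have "\<dots> \<le> exp (- t * m) * exp (n * (t/2 + t\<^sup>2/2))"
    using mgf by simp
  also have "\<dots> = exp (- t * m + n * (t/2 + t\<^sup>2/2))"
    by (rule exp_add[symmetric])
  also have "\<dots> \<le> exp (- (1/4) * \<delta>\<^sup>2 * m)"
    using exponent by simp
  finally show ?thesis .
qed

lemma emeasure_Pi_pmf_insert:
  assumes "finite A" "a \<notin> A"
  shows "emeasure (Pi_pmf (insert a A) d q) S =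
    (\<integral>\<^sup>+y. emeasure (Pi_pmf A d q) {f. f(a := y) \<in> S} \<partial>q a)"
proof -
  have upd: "indicator S (f(a := y)) = indicator {f. f(a := y) \<in> S} f" for f y
    by (simp add: indicator_def)
  show ?thesis
    using assms by (simp add: Pi_pmf_insert' upd del: indicator_simps)
qed

lemma nn_integral_bernoulli_half:
  assumes "\<And>y. f y \<ge> 0"
  shows "(\<integral>\<^sup>+y. ennreal (f y) \<partial>bernoulli_pmf (1/2)) = ennreal ((f True + f False) / 2)"
proof -
  have "(\<integral>\<^sup>+y. ennreal (f y) \<partial>bernoulli_pmf (1/2)) = (ennreal (f True) + ennreal (f False)) / 2"
    by (simp add: divide_ennreal_def distrib_right)
  also have "\<dots> = ennreal ((f True + f False) / 2)"
    using assms divide_ennreal[of "f True + f False" 2] ennreal_plus[of "f True" "f False"] by simp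
  finally show ?thesis .
qed

lemma emeasure_subseq_fair_bits:
  assumes "finite A" "distinct p" "set p \<subseteq> A"
  shows "emeasure (Pi_pmf A d (\<lambda>_. bernoulli_pmf (1/2))) {V. subseq ys (map V p)}
    = subseq_prob (length p) (length ys)"
  using assms
proof (induction p arbitrary: A ys)
  case Nil
  then show ?case
    by (cases ys) (simp_all add: measure_pmf.emeasure_space_1)
next
  case (Cons a p)
  let ?B = "\<lambda>A. Pi_pmf A d (\<lambda>_. bernoulli_pmf (1/2))"
  define A' where "A' = A - {a}"
  have A: "A = insert a A'" "a \<notin> A'" "finite A'" "set p \<subseteq> A'" "a \<notin> set p" "distinct p"
    using Cons.prems by (auto simp: A'_def)
  have "emeasure (?B A) {V. subseq ys (map V (a # p))}
      = (\<integral>\<^sup>+y. emeasure (?B A') {V. subseq ys (y # map V p)} \<partial>bernoulli_pmf (1/2))"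
    unfolding A(1) using A(2,3,5) by (simp add: emeasure_Pi_pmf_insert)
  also have "\<dots> = subseq_prob (length (a # p)) (length ys)"
  proof (cases ys)
    case Nil
    then show ?thesis by (simp add: measure_pmf.emeasure_space_1)
  next
    case ys: (Cons b ys')
    let ?match = "subseq_prob (length p) (length ys')"
    let ?skip = "subseq_prob (length p) (length ys)"
    have "emeasure (?B A') {V. subseq ys (y # map V p)} = (if y = b then ?match else ?skip)" for y
      using ys Cons.IH[OF A(3,6,4)] by simp
    then have "(\<integral>\<^sup>+y. emeasure (?B A') {V. subseq ys (y # map V p)} \<partial>bernoulli_pmf (1/2))
        = ennreal ((?match + ?skip) / 2)"
      by (cases b) (simp_all add: nn_integral_bernoulli_half subseq_prob_nonneg add.commute
          del: nn_integral_bernoulli_pmf)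
    then show ?thesis
      using ys by simp
  qed
  finally show ?case .
qed

lemma length_snd_ZY_pmf: "(z, y) \<in> set_pmf (ZY_pmf j l) \<Longrightarrow> length y = l"
  by (auto simp: ZY_pmf_def)

lemma prob_ZY_pmf_subseq:
  "measure_pmf.prob (ZY_pmf j l) {(z, y). subseq y z} = subseq_prob j l"
proof -
  let ?V = "Pi_pmf {1..j} False (\<lambda>_. bernoulli_pmf (1/2))"
  let ?T = "Pi_pmf {3..j} 0 (\<lambda>i. pmf_of_set {2..i - 1})"
  let ?Y = "Pi_pmf {1..l} False (\<lambda>_. bernoulli_pmf (1/2))"
  have commuted: "ZY_pmf j l = bind_pmf ?T (\<lambda>T. bind_pmf ?Y (\<lambda>Y.
      bind_pmf ?V (\<lambda>V. return_pmf (zseq V T j, map Y [1..<l + 1]))))"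
    unfolding ZY_pmf_def bind_commute_pmf[of ?V ?T] bind_commute_pmf[of ?V ?Y] ..
  have given_T_Y: "emeasure (bind_pmf ?V (\<lambda>V. return_pmf (zseq V T j, ys))) {(z, y). subseq y z}
      = subseq_prob j (length ys)" for T ys
  proof -
    have event: "indicator {(z, y). subseq y z} (zseq V T j, ys)
        = indicator {V. subseq ys (map V (zseq_positions T j))} V" for V
      by (simp add: zseq_eq_map_positions indicator_def)
    have "emeasure (bind_pmf ?V (\<lambda>V. return_pmf (zseq V T j, ys))) {(z, y). subseq y z}
        = emeasure ?V {V. subseq ys (map V (zseq_positions T j))}"
      by (simp add: event del: indicator_simps)
    also have "\<dots> = subseq_prob j (length ys)"
      by (simp add: emeasure_subseq_fair_bits distinct_zseq_positions set_zseq_positions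
          length_zseq_positions)
    finally show ?thesis .
  qed
  have "emeasure (ZY_pmf j l) {(z, y). subseq y z} = subseq_prob j l"
    unfolding commuted emeasure_bind_pmf[of ?T] emeasure_bind_pmf[of ?Y] given_T_Y
    by (simp add: measure_pmf.emeasure_space_1 del: upt_Suc)
  then show ?thesis
    by (simp add: measure_pmf.emeasure_eq_measure subseq_prob_nonneg)
qed

theorem lemma15:
  shows "\<exists>C c :: real. C > 0 \<and> c > 0 \<and>
    (\<forall>\<delta> :: real. \<forall>k :: nat. 0 < \<delta> \<and> \<delta> < 1 \<and> k \<ge> 1 \<longrightarrow>
      measure_pmf.prob (ZY_pmf (nat \<lfloor>2 * (1 - \<delta>) * real k\<rfloor>) k)
        {(z, y). lcs_len z y = k}
      \<le> C * exp (- c * \<delta>\<^sup>2 * real k))"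
proof -
  have "measure_pmf.prob (ZY_pmf (nat \<lfloor>2 * (1 - \<delta>) * real k\<rfloor>) k) {(z, y). lcs_len z y = k}
      \<le> exp (- (1/4) * \<delta>\<^sup>2 * real k)"
    if "0 < \<delta>" "\<delta> < 1" for \<delta> :: real and k :: nat
  proof -
    define j where "j = nat \<lfloor>2 * (1 - \<delta>) * real k\<rfloor>"
    have "subseq y z" if "(z, y) \<in> set_pmf (ZY_pmf j k)" "lcs_len z y = k" for z y
      using that by (intro subseq_if_lcs_len_eq_length) (simp add: length_snd_ZY_pmf[OF that(1)])
    then have "measure_pmf.prob (ZY_pmf j k) {(z, y). lcs_len z y = k}
        \<le> measure_pmf.prob (ZY_pmf j k) {(z, y). subseq y z}"
      by (intro measure_pmf.finite_measure_mono_AE) (auto simp: AE_measure_pmf_iff)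
    also have "\<dots> = subseq_prob j k"
      by (rule prob_ZY_pmf_subseq)
    also have "\<dots> \<le> exp (- (1/4) * \<delta>\<^sup>2 * real k)"
      using that by (intro subseq_prob_le_exp_square) (auto simp: j_def of_nat_nat)
    finally show ?thesis
      unfolding j_def .
  qed
  then show ?thesis
    by (intro exI[of _ 1] exI[of _ "1/4"]) auto
qed

end
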